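(* Let $G$ be a finite connected multigraph and $D\in\operatorname{Div}(G)$. Then the limit $\lim_{\ell\to\infty} r(\ell D)/\ell$ exists (and hence equals $\operatorname{vol}^{\mathbb{T}}_G(D)$).
   Context: A multigraph allows loops and multiple edges; $G$ is finite and connected. $\operatorname{Div}(G)=\bigoplus_{v\in V(G)}\mathbb{Z}v$. For $f:V(G)\to\mathbb{Z}$, $\operatorname{div}(f)=\sum_v\big(\sum_{e\text{ non-loop edge joining }v\text{ to }w}(f(v)-f(w))\big)v$; $D\sim D'$ iff $D-D'$ is principal. $|D|=\{D'\ge 0: D'\sim D\}$. Baker--Norine rank: $r(D)=-1$ if $|D|=\varnothing$, otherwise $r(D)=\max\{d: |D-E|\ne\varnothing\ \forall E\ge 0,\ \deg E=d\}$. The tropical volume is $\operatorname{vol}^{\mathbb{T}}_G(D)=\limsup_{\ell\to\infty} r(\ell D)/\ell$. *)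

theory Defs
  imports "HOL-Analysis.Analysis"
begin

text \<open>A finite multigraph: vertex set V, edge set E, each edge e has endpoints
  src e and tgt e (orientation irrelevant; loops allowed when src e = tgt e,
  parallel edges allowed since distinct edges may share endpoints).\<close>

definition multigraph :: "'v set \<Rightarrow> 'e set \<Rightarrow> ('e \<Rightarrow> 'v) \<Rightarrow> ('e \<Rightarrow> 'v) \<Rightarrow> bool" where
  "multigraph V E src tgt \<longleftrightarrow> finite V \<and> finite E \<and> (\<forall>e\<in>E. src e \<in> V \<and> tgt e \<in> V)"

definition connected_mg :: "'v set \<Rightarrow> 'e set \<Rightarrow> ('e \<Rightarrow> 'v) \<Rightarrow> ('e \<Rightarrow> 'v) \<Rightarrow> bool" where
  "connected_mg V E src tgt \<longleftrightarrow> V \<noteq> {} \<and>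
     (\<forall>u\<in>V. \<forall>w\<in>V. (u, w) \<in> ({(src e, tgt e) | e. e \<in> E} \<union> {(tgt e, src e) | e. e \<in> E})\<^sup>*)"

definition is_divisor :: "'v set \<Rightarrow> ('v \<Rightarrow> int) \<Rightarrow> bool" where
  "is_divisor V D \<longleftrightarrow> (\<forall>v. v \<notin> V \<longrightarrow> D v = 0)"

definition deg :: "'v set \<Rightarrow> ('v \<Rightarrow> int) \<Rightarrow> int" where
  "deg V D = (\<Sum>v\<in>V. D v)"

definition effective :: "('v \<Rightarrow> int) \<Rightarrow> bool" where
  "effective D \<longleftrightarrow> (\<forall>v. D v \<ge> 0)"

definition divf :: "'v set \<Rightarrow> 'e set \<Rightarrow> ('e \<Rightarrow> 'v) \<Rightarrow> ('e \<Rightarrow> 'v) \<Rightarrow> ('v \<Rightarrow> int) \<Rightarrow> 'v \<Rightarrow> int" where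
  "divf V E src tgt f v =
     (if v \<in> V then
        (\<Sum>e\<in>{e\<in>E. src e = v \<and> tgt e \<noteq> v}. f v - f (tgt e)) +
        (\<Sum>e\<in>{e\<in>E. tgt e = v \<and> src e \<noteq> v}. f v - f (src e))
      else 0)"

definition lin_equiv :: "'v set \<Rightarrow> 'e set \<Rightarrow> ('e \<Rightarrow> 'v) \<Rightarrow> ('e \<Rightarrow> 'v) \<Rightarrow> ('v \<Rightarrow> int) \<Rightarrow> ('v \<Rightarrow> int) \<Rightarrow> bool" where
  "lin_equiv V E src tgt D D' \<longleftrightarrow> (\<exists>f. (\<lambda>v. D v - D' v) = divf V E src tgt f)"

definition linsys_nonempty :: "'v set \<Rightarrow> 'e set \<Rightarrow> ('e \<Rightarrow> 'v) \<Rightarrow> ('e \<Rightarrow> 'v) \<Rightarrow> ('v \<Rightarrow> int) \<Rightarrow> bool" where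
  "linsys_nonempty V E src tgt D \<longleftrightarrow>
     (\<exists>D'. is_divisor V D' \<and> effective D' \<and> lin_equiv V E src tgt D' D)"

definition bn_rank :: "'v set \<Rightarrow> 'e set \<Rightarrow> ('e \<Rightarrow> 'v) \<Rightarrow> ('e \<Rightarrow> 'v) \<Rightarrow> ('v \<Rightarrow> int) \<Rightarrow> int" where
  "bn_rank V E src tgt D =
     (if \<not> linsys_nonempty V E src tgt D then -1
      else int (GREATEST d::nat. \<forall>F. is_divisor V F \<and> effective F \<and> deg V F = int d \<longrightarrow>
                 linsys_nonempty V E src tgt (\<lambda>v. D v - F v)))"

end

theory Submission
  imports Defs
begin

(* Write b l = r(l D). An effective divisor of degree a + b splits into effective divisors of
   degrees a and b, so r(A + B) >= r(A) + r(B) whenever both ranks are nonnegative; hence b is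
   superadditive where it is nonnegative. Adding an effective divisor never lowers the rank and
   subtracting one lowers it by at most its degree, which gives b (m + s) >= b m - s deg(D^-);
   moreover b l <= l deg D once b l >= 0, and b l >= -1 always. A Fekete-type argument then shows
   that b l / l tends to the supremum of b k / k over the k > 0 with b k >= 0, and to 0 if there
   is no such k. *)

definition rank_at_least ::
    "'v set \<Rightarrow> 'e set \<Rightarrow> ('e \<Rightarrow> 'v) \<Rightarrow> ('e \<Rightarrow> 'v) \<Rightarrow> ('v \<Rightarrow> int) \<Rightarrow> nat \<Rightarrow> bool" where
  "rank_at_least V E src tgt A d \<longleftrightarrow>
     (\<forall>F. is_divisor V F \<and> effective F \<and> deg V F = int d \<longrightarrow>
          linsys_nonempty V E src tgt (\<lambda>v. A v - F v))"

definition point_div :: "'v \<Rightarrow> int \<Rightarrow> 'v \<Rightarrow> int" where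
  "point_div w c = (\<lambda>v. if v = w then c else 0)"

lemma bn_rank_eq_Greatest:
  "linsys_nonempty V E src tgt A \<Longrightarrow>
   bn_rank V E src tgt A = int (GREATEST d. rank_at_least V E src tgt A d)"
  unfolding bn_rank_def rank_at_least_def by simp

lemma bn_rank_ge_neg1: "-1 \<le> bn_rank V E src tgt A"
  unfolding bn_rank_def by simp

lemma bn_rank_nonneg_iff: "0 \<le> bn_rank V E src tgt A \<longleftrightarrow> linsys_nonempty V E src tgt A"
  unfolding bn_rank_def by simp

lemma deg_add: "deg V (\<lambda>v. A v + B v) = deg V A + deg V B"
  unfolding deg_def by (simp add: sum.distrib)

lemma deg_diff: "deg V (\<lambda>v. A v - B v) = deg V A - deg V B"
  unfolding deg_def by (simp add: sum_subtractf)

lemma deg_scale: "deg V (\<lambda>v. k * A v) = k * deg V A"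
  unfolding deg_def by (simp add: sum_distrib_left)

lemma deg_point_div: "finite V \<Longrightarrow> w \<in> V \<Longrightarrow> deg V (point_div w c) = c"
  unfolding deg_def point_div_def by simp

lemma deg_nonneg: "effective F \<Longrightarrow> 0 \<le> deg V F"
  unfolding effective_def deg_def by (simp add: sum_nonneg)

lemma is_divisor_point_div: "w \<in> V \<Longrightarrow> is_divisor V (point_div w c)"
  unfolding is_divisor_def point_div_def by auto

lemma effective_point_div: "0 \<le> c \<Longrightarrow> effective (point_div w c)"
  unfolding effective_def point_div_def by auto

lemma effective_deg_eq_0:
  assumes "finite V" "is_divisor V F" "effective F" "deg V F = 0"
  shows "F = (\<lambda>_. 0)"
proof
  fix v
  show "F v = 0"
  proof (cases "v \<in> V")
    case True
    then show ?thesis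
      using assms sum_nonneg_eq_0_iff[of V F] unfolding effective_def deg_def by auto
  qed (use assms(2) in \<open>simp add: is_divisor_def\<close>)
qed

lemma effective_subdivisor:
  assumes "finite V" "is_divisor V F" "effective F" "int a \<le> deg V F"
  shows "\<exists>F'. is_divisor V F' \<and> effective F' \<and> effective (\<lambda>v. F v - F' v) \<and> deg V F' = int a"
  using assms(4)
proof (induction a)
  case 0
  show ?case
    using assms(3) by (intro exI[of _ "\<lambda>_. 0"]) (simp add: is_divisor_def effective_def deg_def)
next
  case (Suc a)
  then obtain F' where F': "is_divisor V F'" "effective F'" "effective (\<lambda>v. F v - F' v)"
    "deg V F' = int a"
    by fastforce
  have "deg V F' < deg V F"
    using F'(4) Suc.prems by simp
  then obtain w where w: "w \<in> V" "F' w < F w"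
    unfolding deg_def by (meson not_less sum_mono)
  show ?case
  proof (intro exI conjI)
    show "is_divisor V (\<lambda>v. F' v + point_div w 1 v)"
      using F'(1) w(1) unfolding is_divisor_def point_div_def by auto
    show "effective (\<lambda>v. F' v + point_div w 1 v)"
      using F'(2) unfolding effective_def point_div_def by auto
    show "effective (\<lambda>v. F v - (F' v + point_div w 1 v))"
      using F'(3) w(2) unfolding effective_def point_div_def by auto
    show "deg V (\<lambda>v. F' v + point_div w 1 v) = int (Suc a)"
      using F'(4) assms(1) w(1) by (simp add: deg_add deg_point_div)
  qed
qed

context
  fixes V :: "'v set" and E :: "'e set" and src tgt :: "'e \<Rightarrow> 'v"
  assumes mg: "multigraph V E src tgt"
begin

lemma finite_vertices: "finite V" and finite_edges: "finite E"
  and edge_ends: "e \<in> E \<Longrightarrow> src e \<in> V \<and> tgt e \<in> V"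
  using mg unfolding multigraph_def by auto

lemma divf_add: "divf V E src tgt (\<lambda>v. f v + g v) v = divf V E src tgt f v + divf V E src tgt g v"
proof -
  have "\<And>a b c d::int. a + b - (c + d) = (a - c) + (b - d)"
    by simp
  then show ?thesis
    unfolding divf_def by (simp only: sum.distrib) simp
qed

lemma deg_divf: "deg V (divf V E src tgt f) = 0"
proof -
  define S where "S = {e \<in> E. src e \<noteq> tgt e}"
  have S: "finite S" "src ` S \<subseteq> V" "tgt ` S \<subseteq> V"
    using finite_edges edge_ends unfolding S_def by auto
  have "(\<Sum>e\<in>{e\<in>E. src e = v \<and> tgt e \<noteq> v}. f v - f (tgt e)) =
      (\<Sum>e\<in>{e\<in>S. src e = v}. f (src e) - f (tgt e))"
    "(\<Sum>e\<in>{e\<in>E. tgt e = v \<and> src e \<noteq> v}. f v - f (src e)) =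
      (\<Sum>e\<in>{e\<in>S. tgt e = v}. f (tgt e) - f (src e))" for v
    unfolding S_def by (auto intro!: sum.cong)
  then have "deg V (divf V E src tgt f) =
      (\<Sum>v\<in>V. (\<Sum>e\<in>{e\<in>S. src e = v}. f (src e) - f (tgt e)) +
               (\<Sum>e\<in>{e\<in>S. tgt e = v}. f (tgt e) - f (src e)))"
    unfolding deg_def divf_def by simp
  also have "\<dots> = (\<Sum>e\<in>S. f (src e) - f (tgt e)) + (\<Sum>e\<in>S. f (tgt e) - f (src e))"
    by (simp only: sum.distrib sum.group[OF S(1) finite_vertices S(2)]
        sum.group[OF S(1) finite_vertices S(3)])
  also have "\<dots> = 0"
    by (simp add: sum_subtractf)
  finally show ?thesis .
qed

lemma lin_equiv_deg: "lin_equiv V E src tgt A B \<Longrightarrow> deg V A = deg V B"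
proof -
  assume "lin_equiv V E src tgt A B"
  then obtain f where "(\<lambda>v. A v - B v) = divf V E src tgt f"
    unfolding lin_equiv_def by blast
  then have "deg V (\<lambda>v. A v - B v) = 0"
    by (simp add: deg_divf)
  then show ?thesis
    by (simp add: deg_diff)
qed

lemma linsys_nonempty_deg_nonneg: "linsys_nonempty V E src tgt A \<Longrightarrow> 0 \<le> deg V A"
  unfolding linsys_nonempty_def by (metis deg_nonneg lin_equiv_deg)

lemma linsys_nonempty_effective:
  "is_divisor V A \<Longrightarrow> effective A \<Longrightarrow> linsys_nonempty V E src tgt A"
  unfolding linsys_nonempty_def lin_equiv_def
  by (intro exI[of _ A]) (auto intro!: exI[of _ "\<lambda>_. 0"] simp: divf_def)

lemma linsys_nonempty_add:
  assumes "linsys_nonempty V E src tgt A" "linsys_nonempty V E src tgt B"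
  shows "linsys_nonempty V E src tgt (\<lambda>v. A v + B v)"
proof -
  obtain A' B' f g where "is_divisor V A'" "effective A'" "is_divisor V B'" "effective B'"
    and f: "(\<lambda>v. A' v - A v) = divf V E src tgt f" and g: "(\<lambda>v. B' v - B v) = divf V E src tgt g"
    using assms unfolding linsys_nonempty_def lin_equiv_def by blast
  moreover have "(\<lambda>v. (A' v + B' v) - (A v + B v)) = divf V E src tgt (\<lambda>v. f v + g v)"
    using fun_cong[OF f[symmetric]] fun_cong[OF g[symmetric]] by (simp add: fun_eq_iff divf_add)
  ultimately show ?thesis
    unfolding linsys_nonempty_def lin_equiv_def is_divisor_def effective_def
    by (intro exI[of _ "\<lambda>v. A' v + B' v"]) auto
qed

lemma rank_at_least_0_iff: "rank_at_least V E src tgt A 0 \<longleftrightarrow> linsys_nonempty V E src tgt A"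
proof
  assume "rank_at_least V E src tgt A 0"
  then have "linsys_nonempty V E src tgt (\<lambda>v. A v - 0)"
    unfolding rank_at_least_def by (force simp: is_divisor_def effective_def deg_def)
  then show "linsys_nonempty V E src tgt A"
    by simp
next
  assume "linsys_nonempty V E src tgt A"
  then show "rank_at_least V E src tgt A 0"
    using effective_deg_eq_0[OF finite_vertices] unfolding rank_at_least_def by force
qed

lemma rank_at_least_add:
  assumes "rank_at_least V E src tgt A a" "rank_at_least V E src tgt B b"
  shows "rank_at_least V E src tgt (\<lambda>v. A v + B v) (a + b)"
  unfolding rank_at_least_def
proof (intro allI impI)
  fix F
  assume F: "is_divisor V F \<and> effective F \<and> deg V F = int (a + b)"
  then obtain F' where F': "is_divisor V F'" "effective F'" "effective (\<lambda>v. F v - F' v)"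
    "deg V F' = int a"
    using effective_subdivisor[OF finite_vertices, of F a] by auto
  have "is_divisor V (\<lambda>v. F v - F' v)" "deg V (\<lambda>v. F v - F' v) = int b"
    using F F' by (auto simp: is_divisor_def deg_diff)
  then have "linsys_nonempty V E src tgt (\<lambda>v. (A v - F' v) + (B v - (F v - F' v)))"
    using assms F' unfolding rank_at_least_def by (intro linsys_nonempty_add) auto
  then show "linsys_nonempty V E src tgt (\<lambda>v. A v + B v - F v)"
    by (simp add: algebra_simps)
qed

lemma rank_at_least_diff:
  assumes "rank_at_least V E src tgt A d"
    and "is_divisor V N" "effective N" "deg V N = int n" "n \<le> d"
  shows "rank_at_least V E src tgt (\<lambda>v. A v - N v) (d - n)"
  unfolding rank_at_least_def
proof (intro allI impI)
  fix F
  assume "is_divisor V F \<and> effective F \<and> deg V F = int (d - n)"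
  then have "is_divisor V (\<lambda>v. F v + N v) \<and> effective (\<lambda>v. F v + N v) \<and>
      deg V (\<lambda>v. F v + N v) = int d"
    using assms(2-5) by (auto simp: is_divisor_def effective_def deg_add)
  then show "linsys_nonempty V E src tgt (\<lambda>v. A v - N v - F v)"
    using assms(1) unfolding rank_at_least_def by (simp add: algebra_simps)
qed

context
  assumes nonempty: "V \<noteq> {}"
begin

lemma rank_at_least_le_deg:
  assumes "rank_at_least V E src tgt A d"
  shows "int d \<le> deg V A"
proof -
  obtain w where w: "w \<in> V"
    using nonempty by blast
  then have "linsys_nonempty V E src tgt (\<lambda>v. A v - point_div w (int d) v)"
    using assms unfolding rank_at_least_def
    by (simp add: is_divisor_point_div effective_point_div deg_point_div finite_vertices)
  then have "0 \<le> deg V (\<lambda>v. A v - point_div w (int d) v)"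
    by (rule linsys_nonempty_deg_nonneg)
  then show ?thesis
    by (simp add: deg_diff deg_point_div[OF finite_vertices w])
qed

text \<open>Removing \<open>d - d'\<close> chips from one vertex and putting them back.\<close>
lemma rank_at_least_mono:
  assumes "rank_at_least V E src tgt A d" "d' \<le> d"
  shows "rank_at_least V E src tgt A d'"
proof -
  obtain w where w: "w \<in> V"
    using nonempty by blast
  let ?N = "point_div w (int (d - d'))"
  have N: "is_divisor V ?N" "effective ?N" "deg V ?N = int (d - d')"
    using w by (simp_all add: is_divisor_point_div effective_point_div deg_point_div finite_vertices)
  have "rank_at_least V E src tgt (\<lambda>v. (A v - ?N v) + ?N v) ((d - (d - d')) + 0)"
    using rank_at_least_diff[OF assms(1) N] N(1,2) assms(2)
    by (intro rank_at_least_add) (simp_all add: rank_at_least_0_iff linsys_nonempty_effective)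
  then show ?thesis
    using assms(2) by simp
qed

lemma bn_rank_ge_iff: "int d \<le> bn_rank V E src tgt A \<longleftrightarrow> rank_at_least V E src tgt A d"
proof (cases "linsys_nonempty V E src tgt A")
  case True
  let ?P = "rank_at_least V E src tgt A"
  have bounded: "?P d' \<Longrightarrow> d' \<le> nat (deg V A)" for d'
    using rank_at_least_le_deg by fastforce
  have greatest: "?P (GREATEST d'. ?P d')"
    using GreatestI_nat[of ?P 0 "nat (deg V A)"] True bounded by (simp add: rank_at_least_0_iff)
  have "int d \<le> bn_rank V E src tgt A \<longleftrightarrow> d \<le> (GREATEST d'. ?P d')"
    using True by (simp add: bn_rank_eq_Greatest)
  also have "\<dots> \<longleftrightarrow> ?P d"
    using greatest rank_at_least_mono Greatest_le_nat[of ?P d "nat (deg V A)"] bounded by blast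
  finally show ?thesis .
next
  case False
  then have "\<not> rank_at_least V E src tgt A d"
    using rank_at_least_mono[of A d 0] rank_at_least_0_iff by blast
  then show ?thesis
    using False by (simp add: bn_rank_def)
qed

lemma rank_at_least_bn_rank:
  "0 \<le> bn_rank V E src tgt A \<Longrightarrow> rank_at_least V E src tgt A (nat (bn_rank V E src tgt A))"
  using bn_rank_ge_iff[of "nat (bn_rank V E src tgt A)" A] by simp

lemma bn_rank_le_deg: "0 \<le> bn_rank V E src tgt A \<Longrightarrow> bn_rank V E src tgt A \<le> deg V A"
  using rank_at_least_le_deg[OF rank_at_least_bn_rank] by simp

lemma bn_rank_add:
  assumes "0 \<le> bn_rank V E src tgt A" "0 \<le> bn_rank V E src tgt B"
  shows "bn_rank V E src tgt A + bn_rank V E src tgt B \<le> bn_rank V E src tgt (\<lambda>v. A v + B v)"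
proof -
  have "rank_at_least V E src tgt (\<lambda>v. A v + B v)
      (nat (bn_rank V E src tgt A) + nat (bn_rank V E src tgt B))"
    using assms by (intro rank_at_least_add rank_at_least_bn_rank)
  then have "int (nat (bn_rank V E src tgt A) + nat (bn_rank V E src tgt B))
      \<le> bn_rank V E src tgt (\<lambda>v. A v + B v)"
    by (simp only: bn_rank_ge_iff)
  then show ?thesis
    using assms by simp
qed

lemma bn_rank_add_effective:
  assumes "is_divisor V P" "effective P"
  shows "bn_rank V E src tgt A \<le> bn_rank V E src tgt (\<lambda>v. A v + P v)"
proof (cases "0 \<le> bn_rank V E src tgt A")
  case True
  have "0 \<le> bn_rank V E src tgt P"
    using assms by (simp add: bn_rank_nonneg_iff linsys_nonempty_effective)
  then show ?thesis
    using bn_rank_add[OF True, of P] by linarith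
qed (use bn_rank_ge_neg1[of V E src tgt "\<lambda>v. A v + P v"] in simp)

lemma bn_rank_diff_effective:
  assumes "is_divisor V N" "effective N"
  shows "bn_rank V E src tgt A - deg V N \<le> bn_rank V E src tgt (\<lambda>v. A v - N v)"
proof (cases "deg V N \<le> bn_rank V E src tgt A")
  case True
  have "0 \<le> deg V N"
    using assms(2) by (rule deg_nonneg)
  then have "rank_at_least V E src tgt (\<lambda>v. A v - N v)
      (nat (bn_rank V E src tgt A) - nat (deg V N))"
    using True assms by (intro rank_at_least_diff rank_at_least_bn_rank) auto
  then have "int (nat (bn_rank V E src tgt A) - nat (deg V N))
      \<le> bn_rank V E src tgt (\<lambda>v. A v - N v)"
    by (simp only: bn_rank_ge_iff)
  then show ?thesis
    using True \<open>0 \<le> deg V N\<close> by simp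
qed (use bn_rank_ge_neg1[of V E src tgt "\<lambda>v. A v - N v"] in simp)

text \<open>Split \<open>(m + s) D = (m D + s D\<^sup>+) - s D\<^sup>-\<close> into positive and negative parts.\<close>
lemma bn_rank_multiple_perturb:
  assumes "is_divisor V D"
  shows "bn_rank V E src tgt (\<lambda>v. int m * D v) - int s * deg V (\<lambda>v. max 0 (- D v))
    \<le> bn_rank V E src tgt (\<lambda>v. int (m + s) * D v)"
proof -
  let ?P = "\<lambda>v. int s * max 0 (D v)" and ?N = "\<lambda>v. int s * max 0 (- D v)"
  have P: "is_divisor V ?P" "effective ?P" and N: "is_divisor V ?N" "effective ?N"
    using assms by (auto simp: is_divisor_def effective_def)
  have "bn_rank V E src tgt (\<lambda>v. int m * D v) - deg V ?N
      \<le> bn_rank V E src tgt (\<lambda>v. int m * D v + ?P v) - deg V ?N"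
    using bn_rank_add_effective[OF P] by simp
  also have "\<dots> \<le> bn_rank V E src tgt (\<lambda>v. int m * D v + ?P v - ?N v)"
    using bn_rank_diff_effective[OF N] by simp
  also have "(\<lambda>v. int m * D v + ?P v - ?N v) = (\<lambda>v. int (m + s) * D v)"
    by (auto simp: fun_eq_iff algebra_simps max_def)
  finally show ?thesis
    by (simp add: deg_scale)
qed

end

end

lemma superadditive_multiple:
  fixes b :: "nat \<Rightarrow> real"
  assumes superadditive: "\<And>m n. 0 \<le> b m \<Longrightarrow> 0 \<le> b n \<Longrightarrow> b m + b n \<le> b (m + n)"
    and "0 \<le> b k"
  shows "real (Suc q) * b k \<le> b (Suc q * k)"
proof (induction q)
  case (Suc q)
  then have "0 \<le> b (Suc q * k)"
    using assms(2) by (meson mult_nonneg_nonneg of_nat_0_le_iff order_trans)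
  then have "b k + b (Suc q * k) \<le> b (k + Suc q * k)"
    using assms(2) superadditive by blast
  then show ?case
    using Suc.IH by (simp add: algebra_simps)
qed simp

context
  fixes b :: "nat \<Rightarrow> real" and c :: real
  assumes superadditive: "\<And>m n. 0 \<le> b m \<Longrightarrow> 0 \<le> b n \<Longrightarrow> b m + b n \<le> b (m + n)"
    and perturb: "\<And>m s. b m - real s * c \<le> b (m + s)"
    and perturb_nonneg: "0 \<le> c"
begin

lemma superadditive_ratio_lower_bound:
  assumes "0 < k" "0 \<le> b k" "k \<le> n"
  shows "b k / k - (b k + k * c) / n \<le> b n / n"
proof -
  define q where "q = n div k - 1"
  have q: "Suc q = n div k"
    using assms unfolding q_def by (simp add: div_greater_zero_iff)
  have n_split: "n = Suc q * k + n mod k"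
    unfolding q by simp
  have "b (Suc q * k) - real (n mod k) * c \<le> b n"
    using perturb[of "Suc q * k" "n mod k"] n_split by simp
  moreover have "real (n mod k) * c \<le> k * c"
    using assms(1) perturb_nonneg by (simp add: mult_right_mono)
  moreover have "n \<le> Suc q * k + k"
    using n_split mod_less_divisor[OF assms(1), of n] by linarith
  then have "real n \<le> real (Suc q * k + k)"
    by (simp only: of_nat_le_iff)
  then have "(real n - k) * (b k / k) \<le> (real (Suc q) * k) * (b k / k)"
    using assms(2) by (intro mult_right_mono) (simp_all add: algebra_simps)
  then have "(real n - k) * (b k / k) \<le> real (Suc q) * b k"
    using assms(1) by simp
  moreover have "(real n - k) * (b k / k) = n * (b k / k) - b k"
    using assms(1) by (simp add: left_diff_distrib diff_divide_distrib)
  ultimately have "n * (b k / k) - (b k + k * c) \<le> b n"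
    using superadditive_multiple[OF superadditive assms(2), of q] by linarith
  then have "(n * (b k / k) - (b k + k * c)) / n \<le> b n / n"
    by (simp add: divide_right_mono)
  moreover have "n * (b k / k) / n = b k / k"
    using assms by simp
  ultimately show ?thesis
    by (simp add: diff_divide_distrib)
qed

lemma superadditive_ratio_tendsto_Sup:
  assumes upper: "\<And>n. 0 \<le> b n \<Longrightarrow> b n \<le> real n * M" and "0 < k0" "0 \<le> b k0"
  shows "(\<lambda>n. b n / n) \<longlonglongrightarrow> (SUP k\<in>{k. 0 < k \<and> 0 \<le> b k}. b k / k)"
proof -
  define K where "K = {k. 0 < k \<and> 0 \<le> b k}"
  define \<sigma> where "\<sigma> = (SUP k\<in>K. b k / k)"
  have K: "K \<noteq> {}"
    using assms(2,3) unfolding K_def by auto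
  have bdd: "bdd_above ((\<lambda>k. b k / k) ` K)"
    using upper by (intro bdd_aboveI2[of _ _ M]) (auto simp: K_def pos_divide_le_eq mult.commute)
  have ratio_le: "b n / n \<le> \<sigma>" if "0 < n" for n
  proof (cases "0 \<le> b n")
    case True
    then show ?thesis
      using that bdd unfolding \<sigma>_def by (intro cSUP_upper) (auto simp: K_def)
  next
    case False
    then have "b n / n < 0"
      using that by (simp add: divide_neg_pos)
    also have "0 \<le> b k0 / k0"
      using assms(3) by simp
    also have "\<dots> \<le> \<sigma>"
      using assms(2,3) bdd unfolding \<sigma>_def K_def by (intro cSUP_upper) auto
    finally show ?thesis
      by simp
  qed
  have "(\<lambda>n. b n / n) \<longlonglongrightarrow> \<sigma>"
  proof (rule order_tendstoI)
    fix y
    assume "y < \<sigma>"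
    then obtain k where k: "k \<in> K" "y < b k / k"
      using less_cSUP_iff[OF K bdd] unfolding \<sigma>_def by blast
    have "(\<lambda>n. b k / k - (b k + k * c) / real n) \<longlonglongrightarrow> b k / k - 0"
      by (intro tendsto_intros)
    then have "eventually (\<lambda>n. y < b k / k - (b k + k * c) / real n) sequentially"
      using k(2) by (simp add: order_tendstoD(1))
    then show "eventually (\<lambda>n. y < b n / n) sequentially"
      using eventually_ge_at_top[of k]
    proof eventually_elim
      case (elim n)
      moreover have "b k / k - (b k + k * c) / n \<le> b n / n"
        using k(1) elim(2) unfolding K_def by (intro superadditive_ratio_lower_bound) auto
      ultimately show ?case
        by linarith
    qed
  next
    fix y
    assume "\<sigma> < y"
    have "eventually (\<lambda>n. 0 < n) sequentially"
      by (rule eventually_gt_at_top)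
    then show "eventually (\<lambda>n. b n / n < y) sequentially"
      by eventually_elim (rule le_less_trans[OF ratio_le \<open>\<sigma> < y\<close>])
  qed
  then show ?thesis
    unfolding \<sigma>_def K_def .
qed

lemma superadditive_ratio_convergent:
  assumes upper: "\<And>n. 0 \<le> b n \<Longrightarrow> b n \<le> real n * M" and lower: "\<And>n. - C \<le> b n"
  shows "convergent (\<lambda>n. b n / n)"
proof (cases "\<exists>k>0. 0 \<le> b k")
  case True
  then obtain k0 where "0 < k0" "0 \<le> b k0"
    by blast
  then show ?thesis
    using superadditive_ratio_tendsto_Sup[OF upper] unfolding convergent_def by blast
next
  case False
  have "(\<lambda>n. b n / n) \<longlonglongrightarrow> 0"
  proof (rule tendsto_sandwich)
    show "eventually (\<lambda>n. - C / n \<le> b n / n) sequentially"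
      by (intro always_eventually allI divide_right_mono lower) simp
    show "eventually (\<lambda>n. b n / n \<le> 0) sequentially"
      using eventually_gt_at_top[of "0::nat"]
    proof eventually_elim
      case (elim n)
      then have "b n \<le> 0"
        using False by (meson linorder_not_le less_imp_le)
      then show ?case
        by (simp add: divide_nonpos_nonneg)
    qed
    show "(\<lambda>n. - C / real n) \<longlonglongrightarrow> 0"
      by (rule lim_const_over_n)
  qed simp
  then show ?thesis
    unfolding convergent_def by blast
qed

end

lemma superadditive_int_ratio_convergent:
  fixes b :: "nat \<Rightarrow> int" and c M C :: int
  assumes superadditive: "\<And>m n. 0 \<le> b m \<Longrightarrow> 0 \<le> b n \<Longrightarrow> b m + b n \<le> b (m + n)"
    and perturb: "\<And>m s. b m - int s * c \<le> b (m + s)" and "0 \<le> c"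
    and upper: "\<And>n. 0 \<le> b n \<Longrightarrow> b n \<le> int n * M" and lower: "\<And>n. - C \<le> b n"
  shows "convergent (\<lambda>n. real_of_int (b n) / n)"
proof (rule superadditive_ratio_convergent
    [where c = "real_of_int c" and M = "real_of_int M" and C = "real_of_int C"])
  show "real_of_int (b m) + real_of_int (b n) \<le> real_of_int (b (m + n))"
    if "0 \<le> real_of_int (b m)" "0 \<le> real_of_int (b n)" for m n
    using superadditive[of m n] that by (simp flip: of_int_add)
  show "real_of_int (b m) - real s * real_of_int c \<le> real_of_int (b (m + s))" for m s
    using perturb[of m s] by (metis of_int_diff of_int_le_iff of_int_mult of_int_of_nat_eq)
  show "0 \<le> real_of_int c"
    using assms(3) by simp
  show "real_of_int (b n) \<le> real n * real_of_int M" if "0 \<le> real_of_int (b n)" for n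
    using upper[of n] that by (metis of_int_0_le_iff of_int_le_iff of_int_mult of_int_of_nat_eq)
  show "- real_of_int C \<le> real_of_int (b n)" for n
    using lower[of n] by simp
qed

theorem mainTheorem4:
  fixes V :: "'v set" and E :: "'e set" and src tgt :: "'e \<Rightarrow> 'v" and D :: "'v \<Rightarrow> int"
  assumes "multigraph V E src tgt"
    and "connected_mg V E src tgt"
    and "is_divisor V D"
  shows "convergent (\<lambda>l::nat. real_of_int (bn_rank V E src tgt (\<lambda>v. int l * D v)) / real l)"
proof -
  \<comment> \<open>Connectivity is only needed to know that \<open>V\<close> is nonempty.\<close>
  have nonempty: "V \<noteq> {}"
    using assms(2) unfolding connected_mg_def by blast
  let ?r = "\<lambda>l. bn_rank V E src tgt (\<lambda>v. int l * D v)"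
  show ?thesis
  proof (rule superadditive_int_ratio_convergent
      [where c = "deg V (\<lambda>v. max 0 (- D v))" and M = "deg V D" and C = 1])
    show "?r m + ?r n \<le> ?r (m + n)" if "0 \<le> ?r m" "0 \<le> ?r n" for m n
      using bn_rank_add[OF assms(1) nonempty that] by (simp add: distrib_right)
    show "?r m - int s * deg V (\<lambda>v. max 0 (- D v)) \<le> ?r (m + s)" for m s
      by (rule bn_rank_multiple_perturb[OF assms(1) nonempty assms(3)])
    show "0 \<le> deg V (\<lambda>v. max 0 (- D v))"
      by (simp add: deg_nonneg effective_def)
    show "?r n \<le> int n * deg V D" if "0 \<le> ?r n" for n
      using bn_rank_le_deg[OF assms(1) nonempty that] by (simp add: deg_scale)
    show "- 1 \<le> ?r n" for n
      by (rule bn_rank_ge_neg1)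
  qed
qed

end
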